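(* Let $w$ be an instance of Metric-MAXCUT on a finite set $X$, let $\epsilon>0$, and let $(L,R)$ be a $(3+\epsilon)$-locally stable cut. Then $L$ or $R$ is a metric ball, i.e. a set of the form $\{y\in X: w(c,y)\le r\}$ for some $c\in X$ and $r\ge0$.
   Context: An instance of Metric-MAXCUT is a finite set $X$ with a metric $w$. For $x\in X$ and $B\subseteq X$, $w(x,B)=\sum_{b\in B}w(x,b)$. A cut $(L,R)$ (a partition of $X$) is $\gamma$-locally stable if $w(x,R)\ge\gamma w(x,L)$ for every $x\in L$ and $w(z,L)\ge\gamma w(z,R)$ for every $z\in R$. *)

theory Defs
  imports Complex_Main
begin

definition metric_on :: "'a set \<Rightarrow> ('a \<Rightarrow> 'a \<Rightarrow> real) \<Rightarrow> bool" where
  "metric_on X w \<longleftrightarrow>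
     (\<forall>x\<in>X. \<forall>y\<in>X. w x y \<ge> 0) \<and>
     (\<forall>x\<in>X. \<forall>y\<in>X. w x y = 0 \<longleftrightarrow> x = y) \<and>
     (\<forall>x\<in>X. \<forall>y\<in>X. w x y = w y x) \<and>
     (\<forall>x\<in>X. \<forall>y\<in>X. \<forall>z\<in>X. w x z \<le> w x y + w y z)"

definition wset :: "('a \<Rightarrow> 'a \<Rightarrow> real) \<Rightarrow> 'a \<Rightarrow> 'a set \<Rightarrow> real" where
  "wset w x B = (\<Sum>b\<in>B. w x b)"

definition is_cut :: "'a set \<Rightarrow> 'a set \<Rightarrow> 'a set \<Rightarrow> bool" where
  "is_cut X L R \<longleftrightarrow> L \<union> R = X \<and> L \<inter> R = {}"

definition locally_stable ::
  "real \<Rightarrow> ('a \<Rightarrow> 'a \<Rightarrow> real) \<Rightarrow> 'a set \<Rightarrow> 'a set \<Rightarrow> bool" where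
  "locally_stable \<gamma> w L R \<longleftrightarrow>
     (\<forall>x\<in>L. wset w x R \<ge> \<gamma> * wset w x L) \<and>
     (\<forall>z\<in>R. wset w z L \<ge> \<gamma> * wset w z R)"

definition is_metric_ball :: "'a set \<Rightarrow> ('a \<Rightarrow> 'a \<Rightarrow> real) \<Rightarrow> 'a set \<Rightarrow> bool" where
  "is_metric_ball X w B \<longleftrightarrow>
     (\<exists>c\<in>X. \<exists>r::real. r \<ge> 0 \<and> B = {y\<in>X. w c y \<le> r})"

end

theory Submission
  imports Defs
begin

text \<open>Assume \<open>|R| \<le> |L|\<close> and let \<open>c \<in> L\<close> maximise \<open>w(c, L)\<close>. If some \<open>z \<in> R\<close> were
  no farther from \<open>c\<close> than some \<open>x \<in> L\<close>, put \<open>s = w(c, z)\<close> and \<open>A = w(c, L)\<close>. The triangle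
  inequality gives \<open>|L| s \<le> w(c, L) + w(x, L) \<le> 2A\<close>, and chaining it with stability at \<open>c\<close> and
  at \<open>z\<close> gives \<open>\<gamma>\<^sup>2 A \<le> \<gamma> w(c, R) \<le> \<gamma> w(z, R) + \<gamma> |R| s \<le> w(z, L) + \<gamma> |R| s \<le> A + (1 + \<gamma>) |L| s\<close>.
  Hence \<open>(\<gamma>\<^sup>2 - 1) A \<le> 2 (1 + \<gamma>) A\<close> with \<open>A > 0\<close>, i.e. \<open>\<gamma> \<le> 3\<close>. So for \<open>\<gamma> > 3\<close> every point
  of \<open>R\<close> is strictly farther from \<open>c\<close> than all of \<open>L\<close>, and \<open>L\<close> is the ball around \<open>c\<close> of radius
  \<open>max {w(c, x) | x \<in> L}\<close>.\<close>

lemma is_cut_commute: "is_cut X L R \<Longrightarrow> is_cut X R L"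
  unfolding is_cut_def by blast

lemma locally_stable_commute: "locally_stable \<gamma> w L R \<Longrightarrow> locally_stable \<gamma> w R L"
  unfolding locally_stable_def by blast

lemma wset_le_card_mult_dist_plus_wset:
  assumes "metric_on X w" and "B \<subseteq> X" and "a \<in> X" and "b \<in> X"
  shows "wset w a B \<le> real (card B) * w a b + wset w b B"
proof -
  have "wset w a B \<le> (\<Sum>y\<in>B. w a b + w b y)"
    unfolding wset_def
  proof (rule sum_mono)
    fix y assume "y \<in> B"
    then show "w a y \<le> w a b + w b y"
      using assms unfolding metric_on_def by blast
  qed
  then show ?thesis by (simp add: sum.distrib wset_def)
qed

lemma card_mult_dist_le_wset_plus_wset:
  assumes "metric_on X w" and "B \<subseteq> X" and "a \<in> X" and "b \<in> X"
  shows "real (card B) * w a b \<le> wset w a B + wset w b B"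
proof -
  have "real (card B) * w a b \<le> (\<Sum>y\<in>B. w a y + w b y)"
    unfolding sum_constant[symmetric]
  proof (rule sum_mono)
    fix y assume "y \<in> B"
    then show "w a b \<le> w a y + w b y"
      using assms unfolding metric_on_def by (metis subsetD)
  qed
  then show ?thesis by (simp add: sum.distrib wset_def)
qed

lemma locally_stable_center_closer_to_own_side:
  assumes "finite X" and "metric_on X w" and "is_cut X L R"
    and "locally_stable \<gamma> w L R" and "\<gamma> > 3" and "card R \<le> card L"
    and "c \<in> L" and center: "\<forall>y\<in>L. wset w y L \<le> wset w c L"
    and "x \<in> L" and "z \<in> R"
  shows "w c x < w c z"
proof (rule ccontr)
  assume "\<not> w c x < w c z"
  then have z_near: "w c z \<le> w c x" by simp
  have "L \<subseteq> X" "R \<subseteq> X" "L \<inter> R = {}"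
    using \<open>is_cut X L R\<close> unfolding is_cut_def by auto
  with assms have "c \<in> X" "x \<in> X" "z \<in> X" "c \<noteq> z" "finite L" by (auto intro: finite_subset)
  define s where "s = w c z"
  define A where "A = wset w c L"
  define n where "n = real (card L)"
  define m where "m = real (card R)"
  have "s > 0"
    using \<open>metric_on X w\<close> \<open>c \<in> X\<close> \<open>z \<in> X\<close> \<open>c \<noteq> z\<close> unfolding s_def metric_on_def
    by (metis order_le_less)
  have "n \<ge> 1"
    using \<open>c \<in> L\<close> \<open>finite L\<close> unfolding n_def by (auto simp: Suc_le_eq card_gt_0_iff)
  have "n * w c x \<le> A + wset w x L"
    using card_mult_dist_le_wset_plus_wset[OF \<open>metric_on X w\<close> \<open>L \<subseteq> X\<close> \<open>c \<in> X\<close> \<open>x \<in> X\<close>]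
    unfolding n_def A_def .
  moreover have "n * s \<le> n * w c x"
    using z_near \<open>n \<ge> 1\<close> unfolding s_def by simp
  ultimately have ns_le: "n * s \<le> 2 * A"
    using center \<open>x \<in> L\<close> unfolding A_def by fastforce
  have zL: "wset w z L \<le> n * s + A"
    using wset_le_card_mult_dist_plus_wset[OF \<open>metric_on X w\<close> \<open>L \<subseteq> X\<close> \<open>z \<in> X\<close> \<open>c \<in> X\<close>]
      \<open>metric_on X w\<close> \<open>c \<in> X\<close> \<open>z \<in> X\<close>
    unfolding n_def s_def A_def metric_on_def by auto
  have cR: "wset w c R \<le> m * s + wset w z R"
    using wset_le_card_mult_dist_plus_wset[OF \<open>metric_on X w\<close> \<open>R \<subseteq> X\<close> \<open>c \<in> X\<close> \<open>z \<in> X\<close>]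
    unfolding m_def s_def .
  have stable_c: "\<gamma> * A \<le> wset w c R" and stable_z: "\<gamma> * wset w z R \<le> wset w z L"
    using \<open>locally_stable \<gamma> w L R\<close> \<open>c \<in> L\<close> \<open>z \<in> R\<close> unfolding locally_stable_def A_def by auto
  have "\<gamma> * m * s \<le> \<gamma> * n * s"
    using \<open>card R \<le> card L\<close> \<open>s > 0\<close> \<open>\<gamma> > 3\<close> unfolding m_def n_def by simp
  have "\<gamma> * (\<gamma> * A) \<le> \<gamma> * wset w c R"
    using stable_c \<open>\<gamma> > 3\<close> by simp
  also have "\<dots> \<le> \<gamma> * m * s + \<gamma> * wset w z R"
    using mult_left_mono[OF cR, of \<gamma>] \<open>\<gamma> > 3\<close> by (simp add: algebra_simps)
  also have "\<dots> \<le> \<gamma> * n * s + n * s + A"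
    using stable_z zL \<open>\<gamma> * m * s \<le> \<gamma> * n * s\<close> by linarith
  also have "\<dots> \<le> 2 * (\<gamma> + 1) * A + A"
    using mult_left_mono[OF ns_le, of "\<gamma> + 1"] \<open>\<gamma> > 3\<close> by (simp add: algebra_simps)
  finally have "(\<gamma> + 1) * (\<gamma> - 3) * A \<le> 0"
    by (simp add: algebra_simps)
  moreover have "A > 0"
    using ns_le \<open>n \<ge> 1\<close> \<open>s > 0\<close> by (smt (verit) mult_pos_pos)
  ultimately show False
    using \<open>\<gamma> > 3\<close> by (simp add: mult_le_0_iff)
qed

lemma larger_side_is_metric_ball:
  assumes "finite X" and "metric_on X w" and "is_cut X L R"
    and "locally_stable \<gamma> w L R" and "\<gamma> > 3"
    and "card R \<le> card L" and "L \<noteq> {}"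
  shows "is_metric_ball X w L"
proof -
  have "L \<subseteq> X" and "L \<union> R = X"
    using \<open>is_cut X L R\<close> unfolding is_cut_def by auto
  then have "finite L"
    using \<open>finite X\<close> finite_subset by blast
  have "Max ((\<lambda>y. wset w y L) ` L) \<in> (\<lambda>y. wset w y L) ` L"
    using \<open>finite L\<close> \<open>L \<noteq> {}\<close> by (intro Max_in) auto
  then obtain c where "c \<in> L" and "wset w c L = Max ((\<lambda>y. wset w y L) ` L)"
    by auto
  with \<open>finite L\<close> have center: "\<forall>y\<in>L. wset w y L \<le> wset w c L"
    by simp
  define r where "r = Max (w c ` L)"
  have "r \<in> w c ` L" and radius: "\<And>y. y \<in> L \<Longrightarrow> w c y \<le> r"
    using \<open>finite L\<close> \<open>L \<noteq> {}\<close> unfolding r_def by (auto intro: Max_in)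
  have "c \<in> X"
    using \<open>c \<in> L\<close> \<open>L \<subseteq> X\<close> by blast
  then have "r \<ge> 0"
    using radius[OF \<open>c \<in> L\<close>] \<open>metric_on X w\<close> unfolding metric_on_def by fastforce
  have "L = {y\<in>X. w c y \<le> r}"
  proof
    show "L \<subseteq> {y\<in>X. w c y \<le> r}"
      using \<open>L \<subseteq> X\<close> radius by auto
    show "{y\<in>X. w c y \<le> r} \<subseteq> L"
    proof (rule subsetI, rule ccontr)
      fix z assume "z \<in> {y\<in>X. w c y \<le> r}" and "z \<notin> L"
      then have "z \<in> R" and "w c z \<le> r"
        using \<open>L \<union> R = X\<close> by auto
      moreover obtain x where "x \<in> L" and "r = w c x"
        using \<open>r \<in> w c ` L\<close> by blast
      ultimately show False
        using locally_stable_center_closer_to_own_side[OF assms(1-6) \<open>c \<in> L\<close> center]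
        by fastforce
    qed
  qed
  then show ?thesis
    unfolding is_metric_ball_def using \<open>c \<in> X\<close> \<open>r \<ge> 0\<close> by blast
qed

theorem theorem5:
  fixes X :: "'a set" and w :: "'a \<Rightarrow> 'a \<Rightarrow> real" and \<epsilon> :: real
    and L R :: "'a set"
  assumes "finite X" and "X \<noteq> {}"
    and "metric_on X w"
    and "\<epsilon> > 0"
    and "is_cut X L R"
    and "locally_stable (3 + \<epsilon>) w L R"
  shows "is_metric_ball X w L \<or> is_metric_ball X w R"
proof (cases "card R \<le> card L")
  case True
  have "L \<noteq> {}"
    using True assms(1,2,5) unfolding is_cut_def
    by (metis Un_empty_left card_0_eq finite_Un le_zero_eq)
  then show ?thesis
    using larger_side_is_metric_ball[OF assms(1,3,5,6) _ True] \<open>\<epsilon> > 0\<close> by simp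
next
  case False
  then have "R \<noteq> {}" by auto
  then show ?thesis
    using larger_side_is_metric_ball[OF assms(1,3) is_cut_commute[OF assms(5)]
        locally_stable_commute[OF assms(6)]] False \<open>\<epsilon> > 0\<close> by simp
qed

end
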